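(* Let $S(A)=\{a_n\}$ be independent and $S(B)=\{b_n\}$ be regular. Let $k$ be adequate with respect to $S(A)$. Let $A^{\ast}=\{a_0,a_1,\ldots,a_{2^k-1}\}$ and define $$A\otimes_k B=\{a_{2^k}b+a\mid a\in A^{\ast},\ b\in B\}.$$ Then $S(A\otimes_k B)$ is a regular Stanley sequence, which is independent if and only if $S(B)$ is, having description $$S(A\otimes_k B)=\{a_{2^k}b+a\mid a\in A^{\ast},\ b\in S(B)\},$$ with character $\lambda(A\otimes_k B)=a_{2^k}\cdot \lambda(B)+\lambda(A)$ and shift index $\sigma(A\otimes_k B)=2^k\cdot \sigma(B)$.
   Context: A set of nonnegative integers is 3-free if no three elements form an arithmetic progression. For a 3-free set $A=\{a_0<\cdots<a_k\}$ (all sequences assumed to start at $0$), the Stanley sequence $S(A)=\{a_n\}$ is defined greedily: each $a_{n+1}$ is the smallest integer greater than $a_n$ such that $\{a_0,\ldots,a_{n+1}\}$ is 3-free. A Stanley sequence $S(A)=\{a_n\}$ is independent if there is a constant $\lambda$ (its character $\lambda(A)$) such that for all sufficiently large $k$ and all $0\le i<2^k$, $a_{2^k+i}=a_{2^k}+a_i$ and $a_{2^k}=2a_{2^k-1}-\lambda+1$. A Stanley sequence $S(A)=\{a_n\}$ is regular if there exist constants $\lambda,\sigma$ and an independent Stanley sequence $\{a'_n\}$ of character $\lambda$ (the core) such that for all large $k$ and $0\le i<2^k$, $a_{2^k-\sigma+i}=a_{2^k-\sigma}+a'_i$ and $a_{2^k-\sigma}=2a_{2^k-\sigma-1}-\lambda+1$;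 these constants are unique, and $\lambda$ is called the character $\lambda(A)$ and $\sigma$ the shift index $\sigma(A)$. Independent sequences are exactly the regular ones with $\sigma=0$ and core equal to themselves. An integer $k_0$ is adequate for a regular sequence $S(A)$ if (i) the two defining equations hold for all $k\ge k_0$ and (ii) $a_{2^{k_0}-\sigma(A)}$ is not contained in the minimal-cardinality nucleating set of $S(A)$. *)

theory Defs
  imports Main "HOL-Library.Infinite_Set"
begin

definition three_free :: "nat set \<Rightarrow> bool" where
  "three_free S \<longleftrightarrow> (\<forall>x\<in>S. \<forall>y\<in>S. \<forall>z\<in>S. x < y \<and> y < z \<longrightarrow> x + z \<noteq> 2 * y)"

definition stanley_base :: "nat set \<Rightarrow> bool" where
  "stanley_base A \<longleftrightarrow> finite A \<and> 0 \<in> A \<and> three_free A"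

primrec stan_pre :: "nat set \<Rightarrow> nat \<Rightarrow> nat set" where
  "stan_pre A 0 = A"
| "stan_pre A (Suc n) =
     insert (LEAST x. Max (stan_pre A n) < x \<and> three_free (insert x (stan_pre A n))) (stan_pre A n)"

definition stanley_set :: "nat set \<Rightarrow> nat set" where
  "stanley_set A = (\<Union>n. stan_pre A n)"

definition stanley_seq :: "nat set \<Rightarrow> nat \<Rightarrow> nat" where
  "stanley_seq A = enumerate (stanley_set A)"

definition independent_with :: "nat set \<Rightarrow> int \<Rightarrow> bool" where
  "independent_with A lam \<longleftrightarrow> stanley_base A \<and>
     (\<exists>K. \<forall>k\<ge>K. \<forall>i<2^k.
        int (stanley_seq A (2^k + i)) = int (stanley_seq A (2^k)) + int (stanley_seq A i) \<and>
        int (stanley_seq A (2^k)) = 2 * int (stanley_seq A (2^k - 1)) - lam + 1)"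

definition independent :: "nat set \<Rightarrow> bool" where
  "independent A \<longleftrightarrow> (\<exists>lam. independent_with A lam)"

definition regular_eqs :: "nat set \<Rightarrow> nat set \<Rightarrow> int \<Rightarrow> int \<Rightarrow> nat \<Rightarrow> bool" where
  "regular_eqs A C lam sig k \<longleftrightarrow> sig < 2^k \<and>
     (\<forall>i<2^k.
        int (stanley_seq A (nat (2^k - sig) + i)) =
          int (stanley_seq A (nat (2^k - sig))) + int (stanley_seq C i) \<and>
        int (stanley_seq A (nat (2^k - sig))) =
          2 * int (stanley_seq A (nat (2^k - sig - 1))) - lam + 1)"

definition regular_with :: "nat set \<Rightarrow> int \<Rightarrow> int \<Rightarrow> bool" where
  "regular_with A lam sig \<longleftrightarrow> stanley_base A \<and>
     (\<exists>C. independent_with C lam \<and> (\<exists>K. \<forall>k\<ge>K. regular_eqs A C lam sig k))"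

definition regular :: "nat set \<Rightarrow> bool" where
  "regular A \<longleftrightarrow> (\<exists>lam sig. regular_with A lam sig)"

definition character :: "nat set \<Rightarrow> int" where
  "character A = (THE lam. \<exists>sig. regular_with A lam sig)"

definition shift_index :: "nat set \<Rightarrow> int" where
  "shift_index A = (THE sig. \<exists>lam. regular_with A lam sig)"

definition nucleates :: "nat set \<Rightarrow> nat set \<Rightarrow> bool" where
  "nucleates N A \<longleftrightarrow> stanley_base N \<and> stanley_set N = stanley_set A"

definition min_nucleating :: "nat set \<Rightarrow> nat set \<Rightarrow> bool" where
  "min_nucleating N A \<longleftrightarrow> nucleates N A \<and> (\<forall>N'. nucleates N' A \<longrightarrow> card N \<le> card N')"

definition adequate :: "nat set \<Rightarrow> nat \<Rightarrow> bool" where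
  "adequate A k0 \<longleftrightarrow> regular A \<and>
     (\<exists>C. independent_with C (character A) \<and>
          (\<forall>k\<ge>k0. regular_eqs A C (character A) (shift_index A) k)) \<and>
     (\<forall>N. min_nucleating N A \<longrightarrow> stanley_seq A (nat (2^k0 - shift_index A)) \<notin> N)"

definition otimes :: "nat set \<Rightarrow> nat \<Rightarrow> nat set \<Rightarrow> nat set" where
  "otimes A k B = {stanley_seq A (2^k) * b + a | a b. a \<in> stanley_seq A ` {..<2^k} \<and> b \<in> B}"

end

theory Submission
  imports Defs
begin

text \<open>Put \<open>m = a(2^k)\<close> and \<open>A* = {a(0), \<dots>, a(2^k - 1)}\<close>, so that the elements of the product
  are two-digit numbers \<open>m b + c\<close> with digit \<open>c \<in> A*\<close>. Independence of \<open>S(A)\<close> at levels \<open>k\<close> and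
  \<open>k + 1\<close> makes \<open>S(A)\<close> begin with the blocks \<open>A*\<close>, \<open>m + A*\<close>, \<open>3m + A*\<close>. A three-term progression of
  two-digit numbers is either a progression in both digits or carries \<open>m\<close> between them, and the
  carries are impossible because \<open>A* \<union> (m + A*)\<close> is 3-free. Conversely, a number \<open>m q + r\<close> beyond
  the initial set and outside \<open>A* + m S(B)\<close> is the top of a progression: either \<open>q\<close> is excluded
  from \<open>S(B)\<close>, or \<open>r\<close> is excluded from \<open>A*\<close>, directly by a progression in \<open>A*\<close> or, through the
  excluded number \<open>3m + r\<close>, by one with a carry. Adequacy of \<open>k\<close> puts the minimal nucleating set
  of \<open>S(A)\<close> below \<open>m\<close>, so that these exclusions are greedy ones. Hence \<open>S(A \<otimes>\<^sub>k B) = A* + m S(B)\<close>,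
  enumerated by \<open>n \<mapsto> m b(n div 2^k) + a(n mod 2^k)\<close>, and the regularity equations of \<open>S(B)\<close> at
  level \<open>L\<close> become those of the product at level \<open>L + k\<close>.\<close>

subsection \<open>The greedy construction\<close>

lemma three_free_subset: "three_free T \<Longrightarrow> S \<subseteq> T \<Longrightarrow> three_free S"
  unfolding three_free_def by blast

lemma three_free_insert_beyond:
  assumes "finite P" "P \<noteq> {}" "three_free P"
  shows "three_free (insert (2 * Max P + 1) P)"
  unfolding three_free_def
proof (intro ballI impI)
  have le: "\<And>y. y \<in> P \<Longrightarrow> y \<le> Max P" using assms(1) by simp
  fix x y z assume xyz: "x \<in> insert (2 * Max P + 1) P" "y \<in> insert (2 * Max P + 1) P"
    "z \<in> insert (2 * Max P + 1) P" "x < y \<and> y < z"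
  show "x + z \<noteq> 2 * y"
  proof (cases "z = 2 * Max P + 1")
    case True
    then have "y \<in> P" using xyz by auto
    then show ?thesis using le[of y] True by simp
  next
    case False
    then have "z \<in> P" using xyz by auto
    then have "y \<in> P" "x \<in> P" using le[of z] xyz by auto
    then show ?thesis using \<open>z \<in> P\<close> assms(3) xyz(4) unfolding three_free_def by blast
  qed
qed

definition greedy_next :: "nat set \<Rightarrow> nat" where
  "greedy_next P = (LEAST x. Max P < x \<and> three_free (insert x P))"

lemma greedy_next:
  assumes "finite P" "P \<noteq> {}" "three_free P"
  shows "Max P < greedy_next P \<and> three_free (insert (greedy_next P) P)"
  unfolding greedy_next_def
  by (rule LeastI[of _ "2 * Max P + 1"]) (use three_free_insert_beyond[OF assms] in simp)

lemma less_greedy_next_not_three_free: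
  "Max P < x \<Longrightarrow> x < greedy_next P \<Longrightarrow> \<not> three_free (insert x P)"
  unfolding greedy_next_def using not_less_Least by blast

lemma stan_pre_Suc_greedy_next: "stan_pre A (Suc n) = insert (greedy_next (stan_pre A n)) (stan_pre A n)"
  by (simp add: greedy_next_def)

declare stan_pre.simps(2)[simp del]

lemma stan_pre_invariant:
  assumes "stanley_base A"
  shows "finite (stan_pre A n) \<and> A \<subseteq> stan_pre A n \<and> three_free (stan_pre A n)"
proof (induction n)
  case 0
  then show ?case using assms by (simp add: stanley_base_def)
next
  case (Suc n)
  have "stan_pre A n \<noteq> {}" using Suc assms by (auto simp: stanley_base_def)
  then show ?case using Suc greedy_next[of "stan_pre A n"] by (auto simp: stan_pre_Suc_greedy_next)
qed

lemma stan_pre_nonempty: "stanley_base A \<Longrightarrow> stan_pre A n \<noteq> {}"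
  using stan_pre_invariant[of A n] by (auto simp: stanley_base_def)

lemma Max_stan_pre_Suc:
  assumes "stanley_base A"
  shows "Max (stan_pre A (Suc n)) = greedy_next (stan_pre A n)
    \<and> Max (stan_pre A n) < greedy_next (stan_pre A n)"
proof -
  let ?P = "stan_pre A n"
  have f: "finite ?P" and ne: "?P \<noteq> {}" and t: "three_free ?P"
    using stan_pre_invariant[OF assms] stan_pre_nonempty[OF assms] by auto
  have "Max ?P < greedy_next ?P" using greedy_next[OF f ne t] by simp
  then show ?thesis using f ne by (simp add: stan_pre_Suc_greedy_next)
qed

lemma stan_pre_mono: "m \<le> n \<Longrightarrow> stan_pre A m \<subseteq> stan_pre A n"
  by (induction n) (auto simp: le_Suc_eq stan_pre_Suc_greedy_next)

lemma Max_stan_pre_ge: "stanley_base A \<Longrightarrow> n \<le> Max (stan_pre A n)"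
proof (induction n)
  case (Suc n) then show ?case using Max_stan_pre_Suc[of A n] by simp
qed simp

lemma Max_stan_pre_in_stanley_set: "stanley_base A \<Longrightarrow> Max (stan_pre A n) \<in> stanley_set A"
  unfolding stanley_set_def using stan_pre_invariant[of A n] stan_pre_nonempty[of A n]
  by (intro UnionI[of "stan_pre A n"]) auto

lemma infinite_stanley_set: "stanley_base A \<Longrightarrow> infinite (stanley_set A)"
  unfolding infinite_nat_iff_unbounded_le
  using Max_stan_pre_in_stanley_set Max_stan_pre_ge by blast

lemma subset_stanley_set: "A \<subseteq> stanley_set A"
  unfolding stanley_set_def by (metis UN_upper UNIV_I stan_pre.simps(1))

lemma three_free_stanley_set:
  assumes "stanley_base A" shows "three_free (stanley_set A)"
  unfolding three_free_def
proof (intro ballI impI)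
  fix x y z assume xyz: "x \<in> stanley_set A" "y \<in> stanley_set A" "z \<in> stanley_set A" "x < y \<and> y < z"
  obtain i j l where ijl: "x \<in> stan_pre A i" "y \<in> stan_pre A j" "z \<in> stan_pre A l"
    using xyz(1-3) unfolding stanley_set_def by auto
  let ?n = "max i (max j l)"
  have "x \<in> stan_pre A ?n" "y \<in> stan_pre A ?n" "z \<in> stan_pre A ?n"
    using ijl stan_pre_mono[of i ?n A] stan_pre_mono[of j ?n A] stan_pre_mono[of l ?n A]
    by (auto simp: max_def split: if_splits)
  then show "x + z \<noteq> 2 * y" using stan_pre_invariant[OF assms, of ?n] xyz(4)
    unfolding three_free_def by blast
qed

lemma stan_pre_le_Max_imp_mem:
  assumes "stanley_base A"
  shows "x \<in> stan_pre A n \<Longrightarrow> x \<le> Max A \<Longrightarrow> x \<in> A"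
proof (induction n)
  case 0 then show ?case by simp
next
  case (Suc n)
  have "Max A \<le> Max (stan_pre A n)"
    using stan_pre_invariant[OF assms, of n] assms by (intro Max_mono) (auto simp: stanley_base_def)
  then show ?case using Suc Max_stan_pre_Suc[OF assms, of n] by (auto simp: stan_pre_Suc_greedy_next)
qed

lemma stanley_set_le_Max_iff:
  assumes "stanley_base A" "x \<le> Max A"
  shows "x \<in> stanley_set A \<longleftrightarrow> x \<in> A"
  using stan_pre_le_Max_imp_mem[OF assms(1) _ assms(2)] subset_stanley_set[of A]
  unfolding stanley_set_def by blast

lemma stanley_set_excluded_completes_ap:
  assumes B: "stanley_base A" and x: "Max A < x" "x \<notin> stanley_set A"
  shows "\<exists>y\<in>stanley_set A. \<exists>z\<in>stanley_set A. z < y \<and> y < x \<and> z + x = 2 * y"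
proof -
  have "\<exists>n. Max (stan_pre A n) < x \<and> x \<le> Max (stan_pre A (Suc n))"
  proof (rule ccontr)
    assume "\<not> ?thesis"
    then have step: "Max (stan_pre A n) < x \<Longrightarrow> Max (stan_pre A (Suc n)) < x" for n
      by force
    have "Max (stan_pre A n) < x" for n
      by (induction n) (use x step in auto)
    then show False using Max_stan_pre_ge[OF B, of x] by (metis not_le)
  qed
  then obtain n where n: "Max (stan_pre A n) < x" "x \<le> Max (stan_pre A (Suc n))" by blast
  let ?P = "stan_pre A n"
  have f: "finite ?P" and t: "three_free ?P" using stan_pre_invariant[OF B] by auto
  have below: "\<And>u. u \<in> ?P \<Longrightarrow> u < x" using n(1) f by (meson Max_ge le_less_trans)
  have mx: "Max (stan_pre A (Suc n)) = greedy_next ?P" using Max_stan_pre_Suc[OF B] by simp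
  have "greedy_next ?P \<in> stanley_set A" using Max_stan_pre_in_stanley_set[OF B, of "Suc n"] mx by simp
  then have "x < greedy_next ?P" using n mx x(2) by (metis le_neq_implies_less)
  then have "\<not> three_free (insert x ?P)" using less_greedy_next_not_three_free n(1) by blast
  with t obtain u v w where uvw: "u \<in> insert x ?P" "v \<in> insert x ?P" "w \<in> insert x ?P"
      "u < v" "v < w" "u + w = 2 * v"
    unfolding three_free_def by blast
  have "w = x" using uvw below t unfolding three_free_def by (metis insertE less_asym)
  moreover then have "u \<in> ?P" "v \<in> ?P" using uvw below by auto
  moreover have "?P \<subseteq> stanley_set A" unfolding stanley_set_def by blast
  ultimately show ?thesis using uvw by blast
qed

definition greedy_closed :: "nat set \<Rightarrow> nat \<Rightarrow> bool" where
  "greedy_closed T u \<longleftrightarrow> three_free T \<and>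
     (\<forall>x>u. x \<notin> T \<longrightarrow> (\<exists>y\<in>T. \<exists>z\<in>T. z < y \<and> y < x \<and> z + x = 2 * y))"

lemma greedy_closed_mem_mono:
  assumes "greedy_closed T u" "three_free T'" "u < x" "x \<notin> T" "\<And>y. y < x \<Longrightarrow> y \<in> T \<Longrightarrow> y \<in> T'"
  shows "x \<notin> T'"
proof
  assume "x \<in> T'"
  obtain y z where "y \<in> T" "z \<in> T" "z < y" "y < x" "z + x = 2 * y"
    using assms(1,3,4) unfolding greedy_closed_def by blast
  then show False using assms(2,5) \<open>x \<in> T'\<close> unfolding three_free_def by (metis less_trans)
qed

lemma greedy_closed_unique:
  assumes T: "greedy_closed T u" and T': "greedy_closed T' u"
    and init: "\<And>x. x \<le> u \<Longrightarrow> x \<in> T \<longleftrightarrow> x \<in> T'"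
  shows "T = T'"
proof -
  have "x \<in> T \<longleftrightarrow> x \<in> T'" for x
  proof (induction x rule: less_induct)
    case (less x)
    have tf: "three_free T" "three_free T'" using T T' unfolding greedy_closed_def by auto
    show ?case
    proof (cases "x \<le> u")
      case True then show ?thesis using init by simp
    next
      case False
      then have "u < x" by simp
      then show ?thesis
        using less.IH greedy_closed_mem_mono[OF T tf(2), of x] greedy_closed_mem_mono[OF T' tf(1), of x]
        by blast
    qed
  qed
  then show ?thesis by blast
qed

lemma greedy_closed_stanley_set: "stanley_base A \<Longrightarrow> greedy_closed (stanley_set A) (Max A)"
  unfolding greedy_closed_def using three_free_stanley_set stanley_set_excluded_completes_ap by blast

lemma stanley_set_eqI:
  assumes "stanley_base A" "greedy_closed T (Max A)" "\<And>x. x \<le> Max A \<Longrightarrow> x \<in> T \<longleftrightarrow> x \<in> A"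
  shows "stanley_set A = T"
  using greedy_closed_unique[OF greedy_closed_stanley_set[OF assms(1)] assms(2)]
    stanley_set_le_Max_iff[OF assms(1)] assms(3)
  by blast

lemma Max_less_if_not_in_base:
  assumes "stanley_base N" "x \<in> stanley_set N" "x \<notin> N"
  shows "Max N < x"
  using stanley_set_le_Max_iff[OF assms(1)] assms(2,3) not_less by blast

lemma strict_mono_range_unique:
  fixes f g :: "nat \<Rightarrow> nat"
  assumes f: "strict_mono f" and g: "strict_mono g" and r: "range f = range g"
  shows "f = g"
proof
  fix n show "f n = g n"
  proof (induction n rule: less_induct)
    case (less n)
    obtain j where j: "f n = g j" using r by (metis rangeE range_eqI)
    obtain i where i: "g n = f i" using r by (metis rangeE range_eqI)
    have "\<not> j < n" using less j f g by (metis less.IH strict_mono_less less_irrefl)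
    then have "g n \<le> f n" using j g by (simp add: strict_mono_less_eq)
    have "\<not> i < n" using less i f g by (metis less.IH strict_mono_less less_irrefl)
    then have "f n \<le> g n" using i f by (simp add: strict_mono_less_eq)
    then show ?case using \<open>g n \<le> f n\<close> by simp
  qed
qed

lemma strict_mono_stanley_seq: "stanley_base A \<Longrightarrow> strict_mono (stanley_seq A)"
  unfolding stanley_seq_def using strict_mono_enumerate infinite_stanley_set by blast

lemma range_stanley_seq: "stanley_base A \<Longrightarrow> range (stanley_seq A) = stanley_set A"
  unfolding stanley_seq_def using range_enumerate infinite_stanley_set by blast

lemma stanley_seq_in: "stanley_base A \<Longrightarrow> stanley_seq A n \<in> stanley_set A"
  using range_stanley_seq by blast

lemma stanley_seq_less_iff: "stanley_base A \<Longrightarrow> stanley_seq A i < stanley_seq A j \<longleftrightarrow> i < j"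
  using strict_mono_stanley_seq strict_mono_less by blast

lemma stanley_seq_le_iff: "stanley_base A \<Longrightarrow> stanley_seq A i \<le> stanley_seq A j \<longleftrightarrow> i \<le> j"
  using strict_mono_stanley_seq strict_mono_less_eq by blast

lemma stanley_seq_0: "stanley_base A \<Longrightarrow> stanley_seq A 0 = 0"
proof -
  assume "stanley_base A"
  then have "0 \<in> stanley_set A" using subset_stanley_set by (auto simp: stanley_base_def)
  then show ?thesis unfolding stanley_seq_def enumerate_0 by (simp add: Least_eq_0)
qed

lemma stanley_seq_eqI:
  "stanley_base A \<Longrightarrow> strict_mono f \<Longrightarrow> range f = stanley_set A \<Longrightarrow> stanley_seq A = f"
  using strict_mono_range_unique strict_mono_stanley_seq range_stanley_seq by metis

lemma stanley_set_less_imp_earlier: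
  assumes "stanley_base A" "u \<in> stanley_set A" "u < stanley_seq A n"
  shows "\<exists>j<n. u = stanley_seq A j"
proof -
  obtain j where "u = stanley_seq A j" using assms range_stanley_seq by blast
  then show ?thesis using assms stanley_seq_less_iff by blast
qed

subsection \<open>Uniqueness of character and shift index\<close>

lemma regular_eqs_jump: "regular_eqs X C l s k \<Longrightarrow>
   int (stanley_seq X (nat (2^k - s))) = 2 * int (stanley_seq X (nat (2^k - s - 1))) - l + 1"
  unfolding regular_eqs_def by (metis zero_less_numeral zero_less_power)

lemma regular_eqs_add: "regular_eqs X C l s k \<Longrightarrow> i < 2^k \<Longrightarrow>
   int (stanley_seq X (nat (2^k - s) + i)) = int (stanley_seq X (nat (2^k - s))) + int (stanley_seq C i)"
  unfolding regular_eqs_def by blast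

lemma regular_eqs_shift_less: "regular_eqs X C l s k \<Longrightarrow> s < 2^k"
  unfolding regular_eqs_def by blast

lemma regular_eqs_zero_shift_iff:
  "regular_eqs X C l 0 k \<longleftrightarrow> (\<forall>i<2^k.
     int (stanley_seq X (2^k + i)) = int (stanley_seq X (2^k)) + int (stanley_seq C i) \<and>
     int (stanley_seq X (2^k)) = 2 * int (stanley_seq X (2^k - 1)) - l + 1)"
proof -
  have "nat ((2::int)^k - 1) = 2^k - 1" by (simp add: nat_diff_distrib nat_power_eq)
  then show ?thesis unfolding regular_eqs_def by (simp add: nat_power_eq)
qed

text \<open>With two descriptions of shifts \<open>s2 < s1\<close> at level \<open>k\<close>, the jump of the second lies inside the
  first block, so \<open>a(2^k - s1)\<close> is given by a formula not depending on \<open>k\<close>, contradicting strict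
  monotonicity as \<open>k\<close> grows.\<close>

lemma regular_eqs_two_shifts:
  assumes e1: "regular_eqs X C1 l1 s1 k" and e2: "regular_eqs X C2 l2 s2 k"
    and lt: "s2 < s1" "s1 - s2 < 2^k"
  shows "int (stanley_seq X (nat (2^k - s1))) =
           int (stanley_seq C1 (nat (s1 - s2))) - 2 * int (stanley_seq C1 (nat (s1 - s2) - 1)) + l2 - 1"
proof -
  let ?p = "nat (2^k - s1)" and ?d = "nat (s1 - s2)"
  have s1: "s1 < 2^k" using regular_eqs_shift_less[OF e1] .
  have d: "1 \<le> ?d" "?d < 2^k" using lt by auto
  then have "?d - 1 < 2^k" by (meson diff_le_self le_less_trans)
  note d = d this
  have p2: "nat (2^k - s2) = ?p + ?d" and p3: "nat (2^k - s2 - 1) = ?p + (?d - 1)"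
    using s1 lt by auto
  show ?thesis
    using regular_eqs_add[OF e1 d(2)] regular_eqs_add[OF e1 d(3)] regular_eqs_jump[OF e2]
    unfolding p2 p3 by linarith
qed

lemma regular_eqs_shift_le:
  assumes B: "stanley_base X"
    and e1: "\<forall>k\<ge>K1. regular_eqs X C1 l1 s1 k" and e2: "\<forall>k\<ge>K2. regular_eqs X C2 l2 s2 k"
  shows "s1 \<le> s2"
proof (rule ccontr)
  assume "\<not> s1 \<le> s2"
  then have lt: "s2 < s1" by simp
  define k where "k = max K1 K2 + nat (s1 - s2)"
  have kk: "k \<ge> K1" "k \<ge> K2" "Suc k \<ge> K1" "Suc k \<ge> K2" unfolding k_def by auto
  have "nat (s1 - s2) < 2^k" unfolding k_def by (meson le_add2 less_exp order_le_less_trans)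
  then have "int (nat (s1 - s2)) < 2^k" by (metis of_nat_less_iff of_nat_numeral of_nat_power)
  then have "s1 - s2 < 2^k" "s1 - s2 < 2^Suc k" using lt by auto
  then have "stanley_seq X (nat (2^k - s1)) = stanley_seq X (nat (2^Suc k - s1))"
    using regular_eqs_two_shifts[OF e1[rule_format, OF kk(1)] e2[rule_format, OF kk(2)] lt]
      regular_eqs_two_shifts[OF e1[rule_format, OF kk(3)] e2[rule_format, OF kk(4)] lt]
    by linarith
  moreover have "nat (2^k - s1) < nat (2^Suc k - s1)"
  proof -
    have "s1 < 2^k" using e1 kk regular_eqs_shift_less by blast
    moreover have "(0::int) < 2^k" by simp
    ultimately have "2^k - s1 < 2^Suc k - s1" "0 \<le> 2^k - s1" by auto
    then show ?thesis by linarith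
  qed
  ultimately show False using stanley_seq_less_iff[OF B] by (metis less_irrefl)
qed

lemma regular_with_unique:
  assumes "regular_with X l1 s1" "regular_with X l2 s2"
  shows "s1 = s2 \<and> l1 = l2"
proof -
  obtain C1 C2 K1 K2 where B: "stanley_base X"
    and e1: "\<forall>k\<ge>K1. regular_eqs X C1 l1 s1 k" and e2: "\<forall>k\<ge>K2. regular_eqs X C2 l2 s2 k"
    using assms unfolding regular_with_def by blast
  have s: "s1 = s2" using regular_eqs_shift_le[OF B e1 e2] regular_eqs_shift_le[OF B e2 e1] by simp
  have "regular_eqs X C1 l1 s1 (max K1 K2)" "regular_eqs X C2 l2 s1 (max K1 K2)" using e1 e2 s by auto
  from this[THEN regular_eqs_jump] have "l1 = l2" by linarith
  with s show ?thesis by simp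
qed

lemma character_eqI: "regular_with X l s \<Longrightarrow> character X = l"
  unfolding character_def by (rule the_equality) (auto dest: regular_with_unique)

lemma shift_index_eqI: "regular_with X l s \<Longrightarrow> shift_index X = s"
  unfolding shift_index_def by (rule the_equality) (auto dest: regular_with_unique)

lemma independent_with_iff_regular_eqs:
  "independent_with A l \<longleftrightarrow> stanley_base A \<and> (\<exists>K. \<forall>k\<ge>K. regular_eqs A A l 0 k)"
  unfolding independent_with_def regular_eqs_zero_shift_iff by blast

lemma regular_with_if_independent_with: "independent_with A l \<Longrightarrow> regular_with A l 0"
  unfolding regular_with_def using independent_with_iff_regular_eqs by blast

lemma regular_eqs_zero_shift_core:
  assumes C: "\<forall>k\<ge>K1. regular_eqs X C l 0 k" and X: "\<forall>k\<ge>K2. regular_eqs X X l' 0 k"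
  shows "stanley_seq C = stanley_seq X"
proof
  fix i
  define k where "k = max K1 K2 + i"
  have "i < 2^k" unfolding k_def by (meson le_add2 less_exp order_le_less_trans)
  moreover have "regular_eqs X C l 0 k" "regular_eqs X X l' 0 k" using C X unfolding k_def by auto
  ultimately show "stanley_seq C i = stanley_seq X i"
    unfolding regular_eqs_zero_shift_iff by fastforce
qed

lemma min_nucleating_exists: "stanley_base A \<Longrightarrow> \<exists>N. min_nucleating N A"
  using ex_has_least_nat[of "\<lambda>N. nucleates N A" A card]
  unfolding min_nucleating_def nucleates_def by blast

subsection \<open>Two-digit arithmetic\<close>

lemma mult_add_less_mult_add: "v < u \<Longrightarrow> c < m \<Longrightarrow> m * v + c < m * u + (c' :: nat)"
proof -
  assume "v < u" "c < m"
  then have "m * (v + 1) \<le> m * u" by (intro mult_le_mono2) simp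
  then show ?thesis using \<open>c < m\<close> by (simp add: algebra_simps)
qed

lemma two_digit_progression_cases:
  fixes b1 b2 b3 c1 c2 c3 :: nat
  assumes e: "(m * b1 + c1) + (m * b3 + c3) = 2 * (m * b2 + c2)" and c: "c1 < m" "c2 < m" "c3 < m"
  shows "(b1 + b3 = 2 * b2 \<and> c1 + c3 = 2 * c2) \<or> (b1 + b3 = 2 * b2 + 1 \<and> c1 + c3 + m = 2 * c2)
     \<or> (b1 + b3 + 1 = 2 * b2 \<and> c1 + c3 = 2 * c2 + m)"
proof -
  have e': "m * (b1 + b3) + (c1 + c3) = m * (2 * b2) + 2 * c2" using e by (simp add: algebra_simps)
  consider "b1 + b3 \<ge> 2 * b2 + 2" | "b1 + b3 = 2 * b2 + 1" | "b1 + b3 = 2 * b2"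
    | "b1 + b3 + 1 = 2 * b2" | "b1 + b3 + 2 \<le> 2 * b2" by linarith
  then show ?thesis
  proof cases
    case 1
    then have "m * (b1 + b3) \<ge> m * (2 * b2 + 2)" by (intro mult_le_mono2)
    then show ?thesis using e' c by (simp add: algebra_simps)
  next
    case 2
    then have "m * (b1 + b3) = m * (2 * b2) + m" by (simp add: algebra_simps)
    then show ?thesis using e' 2 by linarith
  next
    case 3
    then show ?thesis using e' by simp
  next
    case 4
    then have "m * (b1 + b3) + m = m * (2 * b2)" by (metis distrib_left mult.right_neutral)
    then show ?thesis using e' 4 by linarith
  next
    case 5
    then have "m * (b1 + b3 + 2) \<le> m * (2 * b2)" by (intro mult_le_mono2)
    then show ?thesis using e' c by (simp add: algebra_simps)
  qed
qed

lemma otimes_mono: "X \<subseteq> Y \<Longrightarrow> otimes A k X \<subseteq> otimes A k Y"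
  unfolding otimes_def by blast

subsection \<open>The product with a fixed independent factor\<close>

text \<open>Independence at levels \<open>k\<close> and \<open>k + 1\<close> puts the blocks \<open>A*\<close>, \<open>m + A*\<close>, \<open>3m + A*\<close> at the
  start of \<open>S(A)\<close>; adequacy supplies the nucleating set \<open>N\<close> below \<open>m\<close>.\<close>

locale product_setting =
  fixes A :: "nat set" and k :: nat and lam :: int and N :: "nat set"
  assumes base: "stanley_base A"
    and block_add: "\<And>i. i < 2^k \<Longrightarrow> stanley_seq A (2^k + i) = stanley_seq A (2^k) + stanley_seq A i"
    and block_jump: "int (stanley_seq A (2^k)) = 2 * int (stanley_seq A (2^k - 1)) - lam + 1"
    and next_block_add:
      "\<And>i. i < 2^Suc k \<Longrightarrow> stanley_seq A (2^Suc k + i) = stanley_seq A (2^Suc k) + stanley_seq A i"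
    and next_block_jump: "int (stanley_seq A (2^Suc k)) = 2 * int (stanley_seq A (2^Suc k - 1)) - lam + 1"
    and nucleus: "stanley_base N" "stanley_set N = stanley_set A"
    and nucleus_below: "Max N < stanley_seq A (2^k)"
begin

abbreviation "a \<equiv> stanley_seq A"
abbreviation "m \<equiv> stanley_seq A (2^k)"
abbreviation "M \<equiv> stanley_seq A (2^k - 1)"
abbreviation "A_star \<equiv> stanley_seq A ` {..<2^k}"

lemma M_less_m: "M < m"
  using stanley_seq_less_iff[OF base] by simp

lemma A_star_le_M: "c \<in> A_star \<Longrightarrow> c \<le> M"
  using stanley_seq_le_iff[OF base] by auto

lemma A_star_less_m: "c \<in> A_star \<Longrightarrow> c < m"
  using A_star_le_M M_less_m by fastforce

lemma A_star_subset: "c \<in> A_star \<Longrightarrow> c \<in> stanley_set A"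
  using stanley_seq_in[OF base] by auto

lemma zero_in_A_star: "0 \<in> A_star"
  using stanley_seq_0[OF base] by (metis image_eqI lessThan_iff zero_less_numeral zero_less_power)

lemma M_in_A_star: "M \<in> A_star" by auto

lemma m_plus_A_star: "c \<in> A_star \<Longrightarrow> m + c \<in> stanley_set A"
  using block_add stanley_seq_in[OF base] by (metis imageE lessThan_iff)

lemma seq_next_block: "a (2^Suc k) = 3 * m"
proof -
  have "(2::nat)^Suc k - 1 = 2^k + (2^k - 1)" by simp
  then have "a (2^Suc k - 1) = m + M" using block_add[of "2^k - 1"] by simp
  then show ?thesis using block_jump next_block_jump by linarith
qed

lemma A_star_if_less_m: "u \<in> stanley_set A \<Longrightarrow> u < m \<Longrightarrow> u \<in> A_star"
  using stanley_set_less_imp_earlier[OF base] by blast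

lemma stanley_set_below_4m:
  assumes "u \<in> stanley_set A" "u < 4 * m"
  shows "u \<in> A_star \<or> (\<exists>c\<in>A_star. u = m + c) \<or> (\<exists>c\<in>A_star. u = 3 * m + c)"
proof -
  have "a (2^Suc k + 2^k) = 4 * m" using next_block_add[of "2^k"] seq_next_block by simp
  then obtain j where j: "j < 2^Suc k + 2^k" "u = a j"
    using stanley_set_less_imp_earlier[OF base assms(1)] assms(2) by metis
  consider "j < 2^k" | "2^k \<le> j" "j < 2^Suc k" | "2^Suc k \<le> j" by linarith
  then show ?thesis
  proof cases
    case 1 then show ?thesis using j by auto
  next
    case 2
    then have "j - 2^k < 2^k" "j = 2^k + (j - 2^k)" by auto
    then show ?thesis using block_add[of "j - 2^k"] j by auto
  next
    case 3
    then have "j - 2^Suc k < 2^k" "j = 2^Suc k + (j - 2^Suc k)" using j by auto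
    then show ?thesis using next_block_add[of "j - 2^Suc k"] j seq_next_block by auto
  qed
qed

lemma Max_nucleus_le_M: "Max N \<le> M"
proof -
  have "Max N \<in> N" using nucleus(1) by (metis Max_in empty_iff stanley_base_def)
  then have "Max N \<in> stanley_set A" using nucleus(2) subset_stanley_set[of N] by auto
  then show ?thesis using A_star_if_less_m nucleus_below A_star_le_M by blast
qed

lemma residue_above_M_completes_ap:
  assumes r: "M < r" "r < m" "r \<notin> A_star"
  shows "\<exists>y\<in>A_star. \<exists>z\<in>A_star. z < y \<and> y < r \<and> z + r = 2 * y"
proof -
  have "r \<notin> stanley_set N" using nucleus(2) A_star_if_less_m r by auto
  then obtain y z where yz: "y \<in> stanley_set A" "z \<in> stanley_set A" "z < y" "y < r" "z + r = 2 * y"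
    using stanley_set_excluded_completes_ap[OF nucleus(1), of r] r Max_nucleus_le_M nucleus(2) by auto
  then have "y \<in> A_star" "z \<in> A_star" using A_star_if_less_m r by auto
  then show ?thesis using yz by blast
qed

text \<open>A residue \<open>r \<le> M\<close> missing from \<open>A*\<close> makes \<open>3m + r\<close> (which lies beyond \<open>N\<close>) miss \<open>S(A)\<close>; the
  progression excluding it has its lower terms in the blocks \<open>A*\<close>, \<open>m + A*\<close>, \<open>3m + A*\<close>, and
  reading off their residues excludes \<open>r\<close> itself, possibly with a carry of \<open>m\<close>.\<close>

lemma residue_le_M_completes_ap:
  assumes r: "r \<le> M" "r \<notin> A_star"
  shows "(\<exists>y\<in>A_star. \<exists>z\<in>A_star. z < y \<and> y < r \<and> z + r = 2 * y)
    \<or> (\<exists>y\<in>A_star. \<exists>z\<in>A_star. 2 * y = z + r + m)"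
proof -
  let ?x = "3 * m + r"
  have rm: "r < m" using r M_less_m by simp
  have "?x \<notin> stanley_set A"
  proof
    assume "?x \<in> stanley_set A"
    moreover have "?x < 4 * m" using rm by simp
    ultimately have "?x \<in> A_star \<or> (\<exists>c\<in>A_star. ?x = m + c) \<or> (\<exists>c\<in>A_star. ?x = 3 * m + c)"
      using stanley_set_below_4m by blast
    then show False using A_star_less_m r(2) by fastforce
  qed
  then obtain y z where yz: "y \<in> stanley_set A" "z \<in> stanley_set A" "z < y" "y < ?x" "z + ?x = 2 * y"
    using stanley_set_excluded_completes_ap[OF nucleus(1), of ?x] Max_nucleus_le_M M_less_m nucleus(2)
    by auto
  have Y: "y \<in> A_star \<or> (\<exists>c\<in>A_star. y = m + c) \<or> (\<exists>c\<in>A_star. y = 3 * m + c)"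
    and Z: "z \<in> A_star \<or> (\<exists>c\<in>A_star. z = m + c) \<or> (\<exists>c\<in>A_star. z = 3 * m + c)"
    using stanley_set_below_4m yz rm by auto
  from Y show ?thesis
  proof (elim disjE bexE)
    assume "y \<in> A_star" then show ?thesis using A_star_le_M M_less_m yz by fastforce
  next
    fix cy assume cy: "cy \<in> A_star" "y = m + cy"
    from Z show ?thesis
    proof (elim disjE bexE)
      assume "z \<in> A_star"
      moreover have "2 * cy = z + r + m" using cy yz by simp
      ultimately show ?thesis using cy by blast
    next
      fix cz assume "cz \<in> A_star" "z = m + cz"
      then show ?thesis using cy yz A_star_le_M[of cy] A_star_le_M[of cz] M_less_m by linarith
    next
      fix cz assume "cz \<in> A_star" "z = 3 * m + cz"
      then show ?thesis using cy yz A_star_le_M[of cy] A_star_le_M[of cz] M_less_m by linarith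
    qed
  next
    fix cy assume cy: "cy \<in> A_star" "y = 3 * m + cy"
    from Z show ?thesis
    proof (elim disjE bexE)
      assume "z \<in> A_star" then show ?thesis using cy yz A_star_le_M[of cy] A_star_le_M[of z] M_less_m r by linarith
    next
      fix cz assume "cz \<in> A_star" "z = m + cz"
      then show ?thesis using cy yz A_star_le_M[of cy] A_star_le_M[of cz] M_less_m r by linarith
    next
      fix cz assume cz: "cz \<in> A_star" "z = 3 * m + cz"
      then have "cz < cy" "cy < r" "cz + r = 2 * cy" using cy yz by auto
      then show ?thesis using cy cz by blast
    qed
  qed
qed

lemma mem_otimes_iff: "x \<in> otimes A k X \<longleftrightarrow> (\<exists>c b. x = m * b + c \<and> c \<in> A_star \<and> b \<in> X)"
  unfolding otimes_def by blast

lemma mem_otimesI: "c \<in> A_star \<Longrightarrow> b \<in> X \<Longrightarrow> m * b + c \<in> otimes A k X"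
  unfolding mem_otimes_iff by blast

lemma three_free_otimes:
  assumes X: "three_free X" shows "three_free (otimes A k X)"
  unfolding three_free_def
proof (intro ballI impI notI)
  fix x y z assume xyz: "x \<in> otimes A k X" "y \<in> otimes A k X" "z \<in> otimes A k X" "x < y \<and> y < z"
    and ap: "x + z = 2 * y"
  obtain c1 b1 where hx: "x = m * b1 + c1" "c1 \<in> A_star" "b1 \<in> X" using xyz(1) unfolding mem_otimes_iff by blast
  obtain c2 b2 where hy: "y = m * b2 + c2" "c2 \<in> A_star" "b2 \<in> X" using xyz(2) unfolding mem_otimes_iff by blast
  obtain c3 b3 where hz: "z = m * b3 + c3" "c3 \<in> A_star" "b3 \<in> X" using xyz(3) unfolding mem_otimes_iff by blast
  have cl: "c1 < m" "c2 < m" "c3 < m" using hx hy hz A_star_less_m by auto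
  have tfA: "three_free (stanley_set A)" using three_free_stanley_set[OF base] .
  from two_digit_progression_cases[OF _ cl] ap hx hy hz
  have "(b1 + b3 = 2 * b2 \<and> c1 + c3 = 2 * c2) \<or> (b1 + b3 = 2 * b2 + 1 \<and> c1 + c3 + m = 2 * c2)
     \<or> (b1 + b3 + 1 = 2 * b2 \<and> c1 + c3 = 2 * c2 + m)" by simp
  then show False
  proof (elim disjE conjE)
    assume bb: "b1 + b3 = 2 * b2" and cc: "c1 + c3 = 2 * c2"
    consider "b1 = b3" | "b1 < b2" "b2 < b3" | "b3 < b2" "b2 < b1" using bb by linarith
    then show False
    proof cases
      case 1
      then have "b2 = b1" using bb by simp
      then have "c1 < c2" "c2 < c3" using xyz(4) hx(1) hy(1) hz(1) \<open>b1 = b3\<close> by auto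
      then show False using cc tfA A_star_subset hx(2) hy(2) hz(2) unfolding three_free_def by blast
    next
      case 2
      then show False using bb X hx(3) hy(3) hz(3) unfolding three_free_def by blast
    next
      case 3
      then show False using bb X hx(3) hy(3) hz(3) unfolding three_free_def by (metis add.commute)
    qed
  next
    assume cc: "c1 + c3 + m = 2 * c2"
    then have "c3 < c2" "c2 < m + c1" using cl by linarith+
    moreover have "c3 + (m + c1) = 2 * c2" using cc by simp
    ultimately show False using tfA A_star_subset m_plus_A_star \<open>c1 \<in> A_star\<close> \<open>c2 \<in> A_star\<close> \<open>c3 \<in> A_star\<close>
      unfolding three_free_def by blast
  next
    assume cc: "c1 + c3 = 2 * c2 + m"
    then have "c1 < m + c2" "m + c2 < m + c3" using cl by linarith+
    moreover have "c1 + (m + c3) = 2 * (m + c2)" using cc by simp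
    ultimately show False using tfA A_star_subset m_plus_A_star \<open>c1 \<in> A_star\<close> \<open>c2 \<in> A_star\<close> \<open>c3 \<in> A_star\<close>
      unfolding three_free_def by blast
  qed
qed

lemma finite_otimes: "finite X \<Longrightarrow> finite (otimes A k X)"
proof -
  assume "finite X"
  moreover have "otimes A k X = (\<lambda>(c, b). m * b + c) ` (A_star \<times> X)"
    unfolding mem_otimes_iff set_eq_iff by force
  ultimately show ?thesis by simp
qed

lemma Max_otimes:
  assumes B: "stanley_base B" shows "Max (otimes A k B) = m * Max B + M"
proof (rule Max_eqI)
  have fB: "finite B" "B \<noteq> {}" using B by (auto simp: stanley_base_def)
  then show "finite (otimes A k B)" using finite_otimes by blast
  show "m * Max B + M \<in> otimes A k B" using mem_otimesI[OF M_in_A_star] fB by simp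
  fix y assume "y \<in> otimes A k B"
  then obtain c b where cb: "y = m * b + c" "c \<in> A_star" "b \<in> B" unfolding mem_otimes_iff by blast
  have "m * b \<le> m * Max B" using fB cb(3) by (simp add: mult_le_mono2)
  then show "y \<le> m * Max B + M" using cb A_star_le_M[of c] by linarith
qed

lemma stanley_base_otimes: "stanley_base B \<Longrightarrow> stanley_base (otimes A k B)"
  unfolding stanley_base_def[of "otimes A k B"]
proof (intro conjI)
  assume B: "stanley_base B"
  then show "finite (otimes A k B)" using finite_otimes by (simp add: stanley_base_def)
  show "0 \<in> otimes A k B" using B mem_otimesI[OF zero_in_A_star, of 0] by (simp add: stanley_base_def)
  show "three_free (otimes A k B)"
    using three_free_subset[OF three_free_otimes[OF three_free_stanley_set[OF B]]]
      otimes_mono[OF subset_stanley_set] by blast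
qed

lemma otimes_stanley_set_le_Max_iff:
  assumes B: "stanley_base B" and x: "x \<le> Max (otimes A k B)"
  shows "x \<in> otimes A k (stanley_set B) \<longleftrightarrow> x \<in> otimes A k B"
proof
  assume "x \<in> otimes A k B" then show "x \<in> otimes A k (stanley_set B)"
    using otimes_mono[OF subset_stanley_set] by blast
next
  assume "x \<in> otimes A k (stanley_set B)"
  then obtain c b where cb: "x = m * b + c" "c \<in> A_star" "b \<in> stanley_set B"
    unfolding mem_otimes_iff by blast
  have "b \<le> Max B"
  proof (rule ccontr)
    assume "\<not> b \<le> Max B"
    then have "m * Max B + M < m * b + c" using mult_add_less_mult_add[of "Max B" b M] M_less_m by simp
    then show False using x cb Max_otimes[OF B] by simp
  qed
  then have "b \<in> B" using stanley_set_le_Max_iff[OF B] cb by blast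
  then show "x \<in> otimes A k B" using cb mem_otimesI by blast
qed

lemma otimes_completes_ap:
  assumes B: "stanley_base B" and u: "Max B \<le> u"
    and c: "cz \<in> A_star" "cy \<in> A_star" "cz \<le> cy" and x: "x + (m * u + cz) = 2 * (m * u + cy)"
    and nondegenerate: "cz < cy \<or> u \<notin> stanley_set B"
  shows "\<exists>y\<in>otimes A k (stanley_set B). \<exists>z\<in>otimes A k (stanley_set B). z < y \<and> y < x \<and> z + x = 2 * y"
proof (cases "u \<in> stanley_set B")
  case True
  then have "cz < cy" using nondegenerate by blast
  then have "m * u + cz < m * u + cy" "m * u + cy < x" "m * u + cz + x = 2 * (m * u + cy)"
    using x by (simp_all add: algebra_simps)
  then show ?thesis using mem_otimesI[OF c(2) True] mem_otimesI[OF c(1) True] by blast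
next
  case False
  have "Max B \<in> stanley_set B"
    using B subset_stanley_set[of B] by (metis Max_in empty_iff stanley_base_def subsetD)
  then have "Max B < u" using u False by (cases "u = Max B") auto
  then obtain w v where vw: "w \<in> stanley_set B" "v \<in> stanley_set B" "v < w" "w < u" "v + u = 2 * w"
    using stanley_set_excluded_completes_ap[OF B _ False] by blast
  have "m * v + cz < m * w + cy" "m * w + cy < m * u + 0"
    using mult_add_less_mult_add[of v w cz m cy] mult_add_less_mult_add[of w u cy m 0]
      vw(3,4) A_star_less_m c(1,2) by auto
  moreover have "m * v + m * u = 2 * (m * w)"
  proof -
    have "m * (v + u) = m * (2 * w)" using vw(5) by simp
    then show ?thesis by (simp add: algebra_simps)
  qed
  moreover have "x + m * u + cz = 2 * (m * u) + 2 * cy" using x by simp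
  ultimately have "m * v + cz < m * w + cy" "m * w + cy < x" "m * v + cz + x = 2 * (m * w) + 2 * cy"
    using c(3) by linarith+
  then show ?thesis using mem_otimesI[OF c(2) vw(1)] mem_otimesI[OF c(1) vw(2)]
    by (metis distrib_left)
qed

lemma otimes_excluded_completes_ap:
  assumes B: "stanley_base B" and x: "Max (otimes A k B) < x" "x \<notin> otimes A k (stanley_set B)"
  shows "\<exists>y\<in>otimes A k (stanley_set B). \<exists>z\<in>otimes A k (stanley_set B). z < y \<and> y < x \<and> z + x = 2 * y"
proof -
  define q where "q = x div m"
  define r where "r = x mod m"
  have mpos: "0 < m" using M_less_m by simp
  have xqr: "x = m * q + r" unfolding q_def r_def by simp
  have rm: "r < m" unfolding r_def using mpos by simp
  have xbig: "m * Max B + M < m * q + r" using x Max_otimes[OF B] xqr by simp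
  have qge: "Max B \<le> q"
  proof (rule ccontr)
    assume "\<not> Max B \<le> q"
    then have "m * q + r < m * Max B + 0" using mult_add_less_mult_add[of q "Max B" r m 0] rm by simp
    then show False using xbig by simp
  qed
  have no_carry: ?thesis if "cz \<in> A_star" "cy \<in> A_star" "cz < cy" "cz + r = 2 * cy" for cz cy
  proof -
    have "x + (m * q + cz) = 2 * (m * q + cy)" using xqr that(4) by simp
    then show ?thesis using otimes_completes_ap[OF B qge that(1,2)] that(3) by simp
  qed
  show ?thesis
  proof (cases "r \<in> A_star")
    case True
    then have "q \<notin> stanley_set B" using x(2) xqr mem_otimesI by blast
    moreover have "x + (m * q + r) = 2 * (m * q + r)" using xqr by simp
    ultimately show ?thesis using otimes_completes_ap[OF B qge True True order_refl] by blast
  next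
    case r: False
    show ?thesis
    proof (cases "M < r")
      case True
      then show ?thesis using residue_above_M_completes_ap[OF True rm r] no_carry by blast
    next
      case False
      then have rM: "r \<le> M" by simp
      have "Max B < q"
      proof (rule ccontr)
        assume "\<not> Max B < q" then have "q = Max B" using qge by simp
        then show False using xbig rM by simp
      qed
      then have "q = Suc (q - 1)" by simp
      then have q: "Max B \<le> q - 1" "m * q = m * (q - 1) + m"
        using \<open>Max B < q\<close> by (simp, metis mult_Suc_right add.commute)
      have carry: ?thesis if "cz \<in> A_star" "cy \<in> A_star" "2 * cy = cz + r + m" for cz cy
      proof -
        have "cz < cy" using that A_star_less_m[of cy] by linarith
        moreover have "x + (m * (q - 1) + cz) = 2 * (m * (q - 1) + cy)" using that(3) xqr q(2) by simp
        ultimately show ?thesis using otimes_completes_ap[OF B q(1) that(1,2)] by simp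
      qed
      show ?thesis using residue_le_M_completes_ap[OF rM r] no_carry carry by blast
    qed
  qed
qed

lemma stanley_set_otimes:
  assumes B: "stanley_base B" shows "stanley_set (otimes A k B) = otimes A k (stanley_set B)"
proof (rule stanley_set_eqI[OF stanley_base_otimes[OF B]])
  show "greedy_closed (otimes A k (stanley_set B)) (Max (otimes A k B))"
    unfolding greedy_closed_def
    using three_free_otimes[OF three_free_stanley_set[OF B]] otimes_excluded_completes_ap[OF B] by blast
qed (use otimes_stanley_set_le_Max_iff[OF B] in blast)

lemma stanley_seq_otimes:
  assumes B: "stanley_base B"
  shows "stanley_seq (otimes A k B) n = m * stanley_seq B (n div 2^k) + a (n mod 2^k)"
proof -
  let ?f = "\<lambda>n. m * stanley_seq B (n div 2^k) + a (n mod 2^k)"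
  have "strict_mono ?f"
  proof (rule strict_monoI)
    fix i j :: nat assume ij: "i < j"
    have am: "a (i mod 2^k) < m" using stanley_seq_less_iff[OF base] by simp
    have "i div 2^k \<le> j div 2^k" using ij by (simp add: div_le_mono)
    then consider "i div 2^k < j div 2^k" | "i div 2^k = j div 2^k" by linarith
    then show "?f i < ?f j"
    proof cases
      case 1 then show ?thesis using mult_add_less_mult_add am stanley_seq_less_iff[OF B] by auto
    next
      case 2
      then have "i mod 2^k < j mod 2^k" using ij
        by (metis div_mod_decomp le_neq_implies_less nat_add_left_cancel_le nat_less_le)
      then show ?thesis using 2 stanley_seq_less_iff[OF base] by simp
    qed
  qed
  moreover have "range ?f = otimes A k (stanley_set B)"
  proof
    show "range ?f \<subseteq> otimes A k (stanley_set B)" using mem_otimesI stanley_seq_in[OF B] by auto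
    show "otimes A k (stanley_set B) \<subseteq> range ?f"
    proof
      fix x assume "x \<in> otimes A k (stanley_set B)"
      then obtain c b where cb: "x = m * b + c" "c \<in> A_star" "b \<in> stanley_set B"
        unfolding mem_otimes_iff by blast
      obtain i where i: "i < 2^k" "c = a i" using cb by auto
      obtain j where j: "b = stanley_seq B j" using cb range_stanley_seq[OF B] by blast
      have "(2^k * j + i) div 2^k = j" "(2^k * j + i) mod 2^k = i" using i by auto
      then have "x = ?f (2^k * j + i)" using cb i j by simp
      then show "x \<in> range ?f" by blast
    qed
  qed
  ultimately show ?thesis
    using stanley_seq_eqI[OF stanley_base_otimes[OF B]] stanley_set_otimes[OF B] by simp
qed

lemma stanley_seq_otimes_block:
  "stanley_base B \<Longrightarrow> i < 2^k \<Longrightarrow> stanley_seq (otimes A k B) (2^k * j + i) = m * stanley_seq B j + a i"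
  using stanley_seq_otimes by simp

lemma stanley_seq_otimes_block_start:
  "stanley_base B \<Longrightarrow> stanley_seq (otimes A k B) (2^k * j) = m * stanley_seq B j"
  using stanley_seq_otimes_block[of B 0 j] stanley_seq_0[OF base] by simp

lemma stanley_seq_otimes_block_end:
  "stanley_base B \<Longrightarrow> 1 \<le> j \<Longrightarrow> stanley_seq (otimes A k B) (2^k * j - 1) = m * stanley_seq B (j - 1) + M"
proof -
  assume "stanley_base B" "1 \<le> j"
  moreover have "2^k * j - 1 = 2^k * (j - 1) + (2^k - (1::nat))" using \<open>1 \<le> j\<close>
    by (simp add: algebra_simps)
  ultimately show ?thesis using stanley_seq_otimes_block[of B "2^k - 1" "j - 1"] by simp
qed

lemma block_jump_scaled:
  assumes "c2 = 2 * c1 - l + 1"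
  shows "int m * c2 = 2 * (int m * c1 + int M) - (int m * l + lam) + 1"
proof -
  have "int m * c2 = int m * (2 * c1 - l + 1)" using assms by simp
  also have "\<dots> = 2 * (int m * c1) - int m * l + int m" by (simp add: algebra_simps)
  finally show ?thesis using block_jump by (smt (verit))
qed

text \<open>The jump at a block boundary of the product passes from \<open>m b(j - 1) + M\<close> to \<open>m b(j)\<close>; this is
  where the character \<open>lam\<close> of \<open>S(A)\<close> enters the character of the product.\<close>

lemma regular_eqs_otimes:
  assumes B: "stanley_base B" and C: "stanley_base C" and eq: "regular_eqs B C l s L"
  shows "regular_eqs (otimes A k B) (otimes A k C) (int m * l + lam) (2^k * s) (L + k)"
proof -
  let ?P = "stanley_seq (otimes A k B)" and ?b = "stanley_seq B"
  have pw: "(2::nat)^(L + k) = 2^k * 2^L" by (simp add: power_add)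
  have s: "s < 2^L" using regular_eqs_shift_less[OF eq] .
  define n where "n = nat (2^L - s)"
  have n: "int n = 2^L - s" "1 \<le> n" unfolding n_def using s by auto
  have "int (2^k * n) = 2^k * (2^L - s)" using n(1) by simp
  also have "\<dots> = 2^(L + k) - 2^k * s" by (simp add: power_add right_diff_distrib)
  finally have "int (2^k * n) = 2^(L + k) - 2^k * s" .
  then have idx: "nat (2^(L + k) - 2^k * s) = 2^k * n" "nat (2^(L + k) - 2^k * s - 1) = 2^k * n - 1"
    by linarith+
  have "nat (2^L - s - 1) = n - 1" unfolding n_def using s by simp
  then have jump: "int (?b n) = 2 * int (?b (n - 1)) - l + 1" using regular_eqs_jump[OF eq] n_def by simp
  show ?thesis
    unfolding regular_eqs_def idx
  proof (intro conjI allI impI)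
    show "2^k * s < 2^(L + k)" using s by (simp add: power_add)
    fix i :: nat assume i: "i < 2^(L + k)"
    define j where "j = i div 2^k"
    define r where "r = i mod 2^k"
    have ijr: "i = 2^k * j + r" "r < 2^k" unfolding j_def r_def by auto
    have "j < 2^L" using i ijr pw
      by (metis add_lessD1 mult_less_cancel1 zero_less_numeral zero_less_power)
    then have "int (?b (n + j)) = int (?b n) + int (stanley_seq C j)"
      using regular_eqs_add[OF eq] unfolding n_def[symmetric] by blast
    moreover have "?P (2^k * n + i) = m * ?b (n + j) + a r"
      using stanley_seq_otimes_block[OF B ijr(2), of "n + j"] ijr by (simp add: algebra_simps)
    moreover have "stanley_seq (otimes A k C) i = m * stanley_seq C j + a r"
      using stanley_seq_otimes_block[OF C ijr(2)] ijr by simp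
    ultimately show "int (?P (2^k * n + i)) = int (?P (2^k * n)) + int (stanley_seq (otimes A k C) i)"
      using stanley_seq_otimes_block_start[OF B] by (simp add: algebra_simps)
  next
    show "int (?P (2^k * n)) = 2 * int (?P (2^k * n - 1)) - (int m * l + lam) + 1"
      using stanley_seq_otimes_block_start[OF B] stanley_seq_otimes_block_end[OF B n(2)] block_jump_scaled[OF jump]
      by simp
  qed
qed

lemma independent_with_otimes:
  assumes "independent_with C l" shows "independent_with (otimes A k C) (int m * l + lam)"
proof -
  obtain K where C: "stanley_base C" and K: "\<forall>L\<ge>K. regular_eqs C C l 0 L"
    using assms independent_with_iff_regular_eqs by blast
  have "regular_eqs (otimes A k C) (otimes A k C) (int m * l + lam) 0 L" if "K + k \<le> L" for L
    using regular_eqs_otimes[OF C C K[rule_format, of "L - k"]] that by simp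
  then show ?thesis using independent_with_iff_regular_eqs stanley_base_otimes[OF C] by blast
qed

lemma regular_with_otimes:
  assumes "regular_with B l s" shows "regular_with (otimes A k B) (int m * l + lam) (2^k * s)"
proof -
  obtain C K where B: "stanley_base B" and C: "independent_with C l"
    and K: "\<forall>L\<ge>K. regular_eqs B C l s L"
    using assms unfolding regular_with_def by blast
  have "stanley_base C" using C by (simp add: independent_with_def)
  then have "regular_eqs (otimes A k B) (otimes A k C) (int m * l + lam) (2^k * s) L" if "K + k \<le> L" for L
    using regular_eqs_otimes[OF B _ K[rule_format, of "L - k"]] that by simp
  then show ?thesis
    unfolding regular_with_def using stanley_base_otimes[OF B] independent_with_otimes[OF C] by blast
qed

lemma independent_level_of_otimes:
  assumes B: "stanley_base B" and j: "j < 2^L"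
    and P: "\<forall>i<2^(L + k). int (stanley_seq (otimes A k B) (2^(L + k) + i)) =
        int (stanley_seq (otimes A k B) (2^(L + k))) + int (stanley_seq (otimes A k B) i) \<and>
      int (stanley_seq (otimes A k B) (2^(L + k))) =
        2 * int (stanley_seq (otimes A k B) (2^(L + k) - 1)) - l + 1"
  shows "stanley_seq B (2^L + j) = stanley_seq B (2^L) + stanley_seq B j"
    and "int m * (2 * int (stanley_seq B (2^L - 1)) - int (stanley_seq B (2^L)) + 1) = l - lam"
proof -
  let ?P = "stanley_seq (otimes A k B)" and ?b = "stanley_seq B"
  have pw: "(2::nat)^(L + k) = 2^k * 2^L" by (simp add: power_add)
  have mpos: "0 < m" using M_less_m by simp
  have "2^(L + k) + 2^k * j = 2^k * (2^L + j)" using pw by (simp add: algebra_simps)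
  then have start: "?P (2^(L + k) + 2^k * j) = m * ?b (2^L + j)" "?P (2^(L + k)) = m * ?b (2^L)"
    "?P (2^k * j) = m * ?b j"
    using stanley_seq_otimes_block_start[OF B] pw by simp_all
  have "2^k * j < 2^(L + k)" using j pw by simp
  then have "int (?P (2^(L + k) + 2^k * j)) = int (?P (2^(L + k))) + int (?P (2^k * j))"
    using P by blast
  then have "?P (2^(L + k) + 2^k * j) = ?P (2^(L + k)) + ?P (2^k * j)" by linarith
  then have "m * ?b (2^L + j) = m * (?b (2^L) + ?b j)" unfolding start by (simp add: algebra_simps)
  then show "?b (2^L + j) = ?b (2^L) + ?b j" using mpos by simp
  have "?P (2^(L + k) - 1) = m * ?b (2^L - 1) + M"
    using stanley_seq_otimes_block_end[OF B, of "2^L"] pw by simp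
  moreover have "int (?P (2^(L + k))) = 2 * int (?P (2^(L + k) - 1)) - l + 1"
    using P[rule_format, of 0] by simp
  ultimately have "int m * int (?b (2^L)) = 2 * (int m * int (?b (2^L - 1)) + int M) - l + 1"
    using start(2) by simp
  moreover have "int m * (2 * int (?b (2^L - 1)) - int (?b (2^L)) + 1)
      = 2 * (int m * int (?b (2^L - 1))) - int m * int (?b (2^L)) + int m"
    by (simp add: algebra_simps)
  ultimately show "int m * (2 * int (?b (2^L - 1)) - int (?b (2^L)) + 1) = l - lam"
    using block_jump by (smt (verit))
qed

lemma independent_if_independent_otimes:
  assumes B: "stanley_base B" and P: "independent_with (otimes A k B) l"
  shows "independent B"
proof -
  let ?b = "stanley_seq B"
  define lB where "lB L = 2 * int (?b (2^L - 1)) - int (?b (2^L)) + 1" for L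
  obtain K where K: "\<forall>L\<ge>K. \<forall>i<2^L.
        int (stanley_seq (otimes A k B) (2^L + i)) =
          int (stanley_seq (otimes A k B) (2^L)) + int (stanley_seq (otimes A k B) i) \<and>
        int (stanley_seq (otimes A k B) (2^L)) = 2 * int (stanley_seq (otimes A k B) (2^L - 1)) - l + 1"
    using P unfolding independent_with_def by blast
  have lev: "?b (2^L + j) = ?b (2^L) + ?b j" "int m * lB L = l - lam" if "K \<le> L" "j < 2^L" for L j
    using independent_level_of_otimes[OF B that(2)] K[rule_format, of "L + k"] that(1)
    unfolding lB_def by auto
  have "m \<noteq> 0" using M_less_m by simp
  have character: "lB L = lB K" if "K \<le> L" for L
  proof -
    have "int m * lB L = int m * lB K" using lev(2)[OF that, of 0] lev(2)[of K 0] by simp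
    then show ?thesis using \<open>m \<noteq> 0\<close> by simp
  qed
  have "independent_with B (lB K)"
    unfolding independent_with_def
  proof (intro conjI exI[of _ K] allI impI)
    fix L i :: nat assume L: "K \<le> L" and i: "i < 2^L"
    show "int (?b (2^L + i)) = int (?b (2^L)) + int (?b i)" using lev(1)[OF L i] by simp
    show "int (?b (2^L)) = 2 * int (?b (2^L - 1)) - lB K + 1" using character[OF L] unfolding lB_def by simp
  qed (rule B)
  then show ?thesis unfolding independent_def by blast
qed

end

lemma adequate_product_setting:
  assumes A: "independent_with A l" and k: "adequate A k"
  obtains N where "product_setting A k l N"
proof -
  have base: "stanley_base A" using A by (simp add: independent_with_def)
  have RA: "regular_with A l 0" using regular_with_if_independent_with[OF A] .
  obtain C where C: "\<forall>k'\<ge>k. regular_eqs A C l 0 k'"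
    using k unfolding adequate_def character_eqI[OF RA] shift_index_eqI[OF RA] by blast
  obtain K where K: "\<forall>k'\<ge>K. regular_eqs A A l 0 k'" using A independent_with_iff_regular_eqs by blast
  have core: "stanley_seq C = stanley_seq A" using regular_eqs_zero_shift_core[OF C K] .
  have "regular_eqs A C l 0 k" "regular_eqs A C l 0 (Suc k)" using C by auto
  then have levels: "regular_eqs A A l 0 k" "regular_eqs A A l 0 (Suc k)"
    unfolding regular_eqs_def core .
  obtain N where N: "min_nucleating N A" using min_nucleating_exists[OF base] by blast
  then have "stanley_seq A (2^k) \<notin> N"
    using k unfolding adequate_def shift_index_eqI[OF RA] by (simp add: nat_power_eq)
  moreover have "stanley_base N" "stanley_set N = stanley_set A"
    using N unfolding min_nucleating_def nucleates_def by auto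
  moreover have "Max N < stanley_seq A (2^k)"
    using calculation Max_less_if_not_in_base stanley_seq_in[OF base] by metis
  moreover have "stanley_seq A (2^k' + i) = stanley_seq A (2^k') + stanley_seq A i"
    if "regular_eqs A A l 0 k'" "i < 2^k'" for k' i
    using that(1)[unfolded regular_eqs_zero_shift_iff, rule_format, OF that(2)] by linarith
  moreover have "int (stanley_seq A (2^k')) = 2 * int (stanley_seq A (2^k' - 1)) - l + 1"
    if "regular_eqs A A l 0 k'" for k'
    using that[unfolded regular_eqs_zero_shift_iff, rule_format, of 0] by simp
  ultimately have "product_setting A k l N"
    unfolding product_setting_def using base levels by blast
  then show thesis by (rule that)
qed

theorem theorem2:
  fixes A B :: "nat set" and k :: nat
  assumes "independent A"
    and "regular B"
    and "adequate A k"
  shows "regular (otimes A k B)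
    \<and> (independent (otimes A k B) \<longleftrightarrow> independent B)
    \<and> stanley_set (otimes A k B) =
        {stanley_seq A (2^k) * b + a | a b. a \<in> stanley_seq A ` {..<2^k} \<and> b \<in> stanley_set B}
    \<and> character (otimes A k B) = int (stanley_seq A (2^k)) * character B + character A
    \<and> shift_index (otimes A k B) = 2^k * shift_index B"
proof -
  obtain lA where IA: "independent_with A lA" using assms(1) unfolding independent_def by blast
  obtain N where "product_setting A k lA N" using adequate_product_setting[OF IA assms(3)] .
  then interpret product_setting A k lA N .
  obtain lB sB where RB: "regular_with B lB sB" using assms(2) unfolding regular_def by blast
  then have B: "stanley_base B" by (simp add: regular_with_def)
  have RP: "regular_with (otimes A k B) (int m * lB + lA) (2^k * sB)" using regular_with_otimes[OF RB] .
  have "independent (otimes A k B) \<longleftrightarrow> independent B"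
    using independent_if_independent_otimes[OF B] independent_with_otimes
    unfolding independent_def by blast
  moreover have "character A = lA" using character_eqI[OF regular_with_if_independent_with[OF IA]] .
  moreover have "stanley_set (otimes A k B) =
      {m * b + a | a b. a \<in> A_star \<and> b \<in> stanley_set B}"
    using stanley_set_otimes[OF B] unfolding otimes_def[of A k "stanley_set B"] .
  ultimately show ?thesis
    using RP character_eqI[OF RB] character_eqI[OF RP] shift_index_eqI[OF RB] shift_index_eqI[OF RP]
    unfolding regular_def by auto
qed

end
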